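(* Let $f\in\mathbb{Z}[x,y]$ be square-free with $n_y:=\deg_y f\ge1$, and assume $\deg_y f(\alpha,y)=n_y$ for all $\alpha\in\mathbb{C}$. Let $p$ be a prime that does not divide the leading coefficient (with respect to $y$) of $f$ and of $f_y$, and let $d_i^{(p)}:=\deg R_i^{(p)}$, with $R_i^{(p)}$ as in the context. Then $$N^-:=\sum_{i\ge1}(n_y-i)\,d_i^{(p)}\le N,$$ where $N:=\sum_{\alpha}n_\alpha$, the sum taken over all complex $x$-critical values $\alpha$ of $f$, is the total number of distinct complex points of the curve $f=0$ lying in $x$-critical fibers.
   Context: An $x$-critical value of $f$ is an $\alpha\in\mathbb{C}$ with $f(\alpha,\beta)=f_y(\alpha,\beta)=0$ for some $\beta\in\mathbb{C}$; equivalently a root of $R=\operatorname{res}(f,f_y;y)$. $n_\alpha$ is the number of distinct complex roots of $f(\alpha,y)$. Let $R^*$ be the square-free part of $R$. For polynomials $a,b$ in $y$ with coefficients in a ring $A[x]$, the $i$-th principal subresultant coefficient $\operatorname{sres}_i(a,b;y)\in A[x]$ is the coefficient of $y^i$ in the $i$-th subresultant $\operatorname{Sres}_i(a,b;y)$ (equivalently the determinant of the submatrix of the Sylvester matrix of $a,b$ w.r.t. $y$ obtained by deleting the last $i$ rows of $a$-coefficients, the last $i$ rows of $b$-coefficients and the last $2i$ columns). Let $f^{(p)}=f\bmod p$, $g^{(p)}=f_y\bmod p\in\mathbb{Z}_p[x,y]$, and $\operatorname{sr}_i^{(p)}:=\operatorname{sres}_i(f^{(p)},g^{(p)};y)\in\mathbb{Z}_p[x]$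 computed over $\mathbb{Z}_p$. Define in $\mathbb{Z}_p[x]$: $S_0^{(p)}:=R^*\bmod p$, $S_i^{(p)}:=\gcd(S_{i-1}^{(p)},\operatorname{sr}_i^{(p)})$ for $i\ge1$, and $R_i^{(p)}:=\gcd(S_0^{(p)},\dots,S_{i-1}^{(p)})/\gcd(S_0^{(p)},\dots,S_i^{(p)})$ for $i\ge1$ (gcds taken up to units; only degrees matter). *)

theory Defs
  imports "Subresultants.Subresultant" "Berlekamp_Zassenhaus.Finite_Field"
    "HOL-Computational_Algebra.Squarefree" "HOL-Computational_Algebra.Polynomial_Factorial"
begin

text \<open>Bivariate integer polynomials f(x,y) are represented as int poly poly:
  polynomials in y whose coefficients are polynomials in x.\<close>

definition eval_x :: "complex \<Rightarrow> int poly poly \<Rightarrow> complex poly" where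
  "eval_x \<alpha> F = map_poly (\<lambda>c. poly (map_poly of_int c) \<alpha>) F"

definition res_y :: "int poly poly \<Rightarrow> int poly" where
  "res_y F = resultant F (pderiv F)"

definition sqfree_part :: "int poly \<Rightarrow> int poly" where
  "sqfree_part R = primitive_part (R div gcd R (pderiv R))"

definition x_critical :: "int poly poly \<Rightarrow> complex \<Rightarrow> bool" where
  "x_critical F \<alpha> \<longleftrightarrow> (\<exists>\<beta>. poly (eval_x \<alpha> F) \<beta> = 0 \<and> poly (eval_x \<alpha> (pderiv F)) \<beta> = 0)"

definition n_fiber :: "int poly poly \<Rightarrow> complex \<Rightarrow> nat" where
  "n_fiber F \<alpha> = card {\<beta>. poly (eval_x \<alpha> F) \<beta> = 0}"

definition N_total :: "int poly poly \<Rightarrow> nat" where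
  "N_total F = (\<Sum>\<alpha>\<in>{\<alpha>. x_critical F \<alpha>}. n_fiber F \<alpha>)"

definition mod_p_poly2 :: "int poly poly \<Rightarrow> 'p::prime_card mod_ring poly poly" where
  "mod_p_poly2 F = map_poly (map_poly of_int) F"

definition sres :: "nat \<Rightarrow> 'a::comm_ring_1 poly poly \<Rightarrow> 'a poly poly \<Rightarrow> 'a poly" where
  "sres i A B = Polynomial.coeff (subresultant i A B) i"

definition sr_p :: "int poly poly \<Rightarrow> nat \<Rightarrow> 'p::prime_card mod_ring poly" where
  "sr_p F i = sres i (mod_p_poly2 F :: 'p mod_ring poly poly) (mod_p_poly2 (pderiv F))"

fun S_p :: "int poly poly \<Rightarrow> nat \<Rightarrow> 'p::prime_card mod_ring poly" where
  "S_p F 0 = map_poly of_int (sqfree_part (res_y F))"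
| "S_p F (Suc i) = gcd (S_p F i) (sr_p F (Suc i))"

definition R_p :: "int poly poly \<Rightarrow> nat \<Rightarrow> 'p::prime_card mod_ring poly" where
  "R_p F i = Gcd ((S_p F :: nat \<Rightarrow> 'p mod_ring poly) ` {0..<i}) div Gcd ((S_p F) ` {0..i})"

definition d_p :: "int poly poly \<Rightarrow> nat \<Rightarrow> 'p::prime_card itself \<Rightarrow> nat" where
  "d_p F i _ = degree (R_p F i :: 'p mod_ring poly)"

end

theory Submission
  imports Defs "Subresultants.Subresultant_Gcd" "Berlekamp_Zassenhaus.Factor_Bound"
begin

text \<open>Write \<open>s\<^sub>j\<close> for the degree of \<open>S\<^sub>j\<^sup>(\<^sup>p\<^sup>)\<close>. Since \<open>d\<^sub>i\<^sup>(\<^sup>p\<^sup>) = s\<^sub>i\<^sub>-\<^sub>1 - s\<^sub>i\<close>, the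
  weighted sum equals \<open>\<Sum>\<^sub>j (s\<^sub>0 - s\<^sub>j)\<close>. Running the same gcd recursion over \<open>\<int>\<close> gives
  polynomials \<open>G\<^sub>j\<close> whose reductions modulo \<open>p\<close> divide \<open>S\<^sub>j\<^sup>(\<^sup>p\<^sup>)\<close>, so
  \<open>s\<^sub>0 - s\<^sub>j \<le> deg R\<^sup>* - deg G\<^sub>j\<close>. As \<open>R\<^sup>*\<close> is square-free over \<open>\<complex>\<close> and its roots are
  critical values, \<open>deg R\<^sup>* - deg G\<^sub>j\<close> is at most the number of critical \<open>\<alpha>\<close> at which some
  \<open>sres\<^sub>i(\<alpha>)\<close> with \<open>1 \<le> i \<le> j\<close> is nonzero. Because the fibre degrees are constant,
  \<open>sres\<^sub>i(\<alpha>)\<close> is the principal subresultant coefficient of \<open>f(\<alpha>,y)\<close> and \<open>f\<^sub>y(\<alpha>,y)\<close>, so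
  its nonvanishing forces \<open>n\<^sub>y - n\<^sub>\<alpha> = deg gcd(f(\<alpha>,y), f\<^sub>y(\<alpha>,y)) \<le> i\<close>; hence every \<open>\<alpha>\<close>
  is counted for at most \<open>n\<^sub>\<alpha>\<close> indices \<open>j\<close>.\<close>

section \<open>Subresultants\<close>

lemma (in comm_ring_hom) subresultant_map_poly:
  assumes dF: "degree (map_poly hom F) = degree F" and dG: "degree (map_poly hom G) = degree G"
  shows "map_poly hom (subresultant J F G) = subresultant J (map_poly hom F) (map_poly hom G)"
proof -
  interpret p: map_poly_comm_ring_hom hom ..
  note d = subresultant_mat_def Let_def
  show ?thesis unfolding subresultant_def p.hom_det[symmetric]
  proof (rule arg_cong[of _ _ det], rule eq_matI, goal_cases)
    case (1 i j)
    hence ij: "i < degree F - J + (degree G - J)" "j < degree F - J + (degree G - J)"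
      unfolding d dF dG by auto
    show ?case
      by (auto simp add: coeff_int_def d map_mat_def index_mat(1)[OF ij] hom_distribs dF dG)
  qed (auto simp: d dF dG)
qed

lemma degree_subresultant_le:
  assumes "J \<le> degree F" "J \<le> degree G" "(degree F - J) + (degree G - J) \<noteq> 0"
  shows "degree (subresultant J F G) \<le> J"
proof (rule degree_le, intro allI impI)
  fix k assume "J < k"
  then show "Polynomial.coeff (subresultant J F G) k = 0"
    using subresultant_zero_ge[of F G J k] subresultant_zero_lt[of k F G J] assms
    by (cases "k \<ge> degree F + (degree G - J)") auto
qed

text \<open>A common divisor divides every entry of the last row of the subresultant matrix.\<close>

lemma dvd_subresultant:
  fixes F G D :: "'a :: comm_ring_1 poly"
  assumes "D dvd F" "D dvd G" "(degree F - J) + (degree G - J) \<noteq> 0"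
  shows "D dvd subresultant J F G"
proof -
  define n where "n = (degree F - J) + (degree G - J)"
  have n: "n > 0" using assms(3) n_def by auto
  let ?M = "subresultant_mat J F G"
  have M: "?M \<in> carrier_mat n n" unfolding carrier_mat_def n_def by simp
  have "subresultant J F G = (\<Sum>j<n. ?M $$ (n - 1, j) * cofactor ?M (n - 1) j)"
    unfolding subresultant_def by (rule laplace_expansion_row[OF M]) (use n in auto)
  also have "D dvd \<dots>"
  proof (rule dvd_sum)
    fix j assume "j \<in> {..<n}"
    then have "D dvd ?M $$ (n - 1, j)"
      using n assms(1,2) unfolding n_def by (subst subresultant_index_mat) (auto simp: Let_def)
    then show "D dvd ?M $$ (n - 1, j) * cofactor ?M (n - 1) j" by simp
  qed
  finally show ?thesis .
qed

lemma principal_subresultant_nonzero_imp_degree_gcd_le: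
  fixes F G :: "'a :: {factorial_ring_gcd,semiring_gcd_mult_normalize} poly"
  assumes "J \<le> degree F" "J \<le> degree G" "(degree F - J) + (degree G - J) \<noteq> 0"
    and "Polynomial.coeff (subresultant J F G) J \<noteq> 0"
  shows "degree (gcd F G) \<le> J"
proof -
  have "subresultant J F G \<noteq> 0" using assms(4) by auto
  moreover have "gcd F G dvd subresultant J F G"
    by (rule dvd_subresultant[OF _ _ assms(3)]) auto
  ultimately show ?thesis
    using dvd_imp_degree_le degree_subresultant_le[OF assms(1-3)] le_trans by blast
qed

section \<open>Roots of complex polynomials\<close>

lemma rsquarefree_div_gcd_pderiv:
  fixes F :: "'a :: {field_char_0,field_gcd} poly"
  assumes "F \<noteq> 0"
  shows "rsquarefree (F div gcd F (pderiv F)) \<and> (\<forall>x. poly (F div gcd F (pderiv F)) x = 0 \<longleftrightarrow> poly F x = 0)"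
proof (cases "pderiv F = 0")
  case True
  then obtain c where "F = [:c:]" using pderiv_iszero by blast
  with assms show ?thesis
    by (auto simp: rsquarefree_def order_0I normalize_const_poly is_unit_normalize dvd_field_iff)
next
  case False
  define d where "d = gcd F (pderiv F)"
  obtain r s where "bezout_coefficients F (pderiv F) = (r, s)" by (rule prod.exhaust)
  from bezout_coefficients[OF this] have "d = r * F + s * pderiv F" unfolding d_def by simp
  moreover have "F = (F div d) * d" "pderiv F = (pderiv F div d) * d" unfolding d_def by simp_all
  ultimately show ?thesis using poly_squarefree_decomp[OF False] unfolding d_def by blast
qed

lemma card_roots_add_degree_gcd_pderiv:
  fixes F :: "complex poly"
  assumes F: "F \<noteq> 0"
  shows "card {x. poly F x = 0} + degree (gcd F (pderiv F)) = degree F"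
proof -
  let ?g = "gcd F (pderiv F)"
  let ?q = "F div ?g"
  have Fq: "F = ?q * ?g" by simp
  have g0: "?g \<noteq> 0" using F by simp
  have q0: "?q \<noteq> 0" using F Fq by (metis mult_zero_left)
  note decomp = rsquarefree_div_gcd_pderiv[OF F]
  have "card {x. poly F x = 0} = card {x. poly ?q x = 0}" using decomp by simp
  also have "\<dots> = degree ?q" using rsquarefree_card_degree[OF q0] decomp by simp
  finally show ?thesis using degree_mult_eq[OF q0 g0] Fq by simp
qed

lemma degree_gcd_pos_iff_common_root:
  fixes F G :: "complex poly"
  assumes F: "F \<noteq> 0"
  shows "degree (gcd F G) \<noteq> 0 \<longleftrightarrow> (\<exists>x. poly F x = 0 \<and> poly G x = 0)"
proof
  assume "degree (gcd F G) \<noteq> 0"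
  then have "\<not> constant (poly (gcd F G))" by (simp add: constant_degree)
  from fundamental_theorem_of_algebra[OF this] obtain x where "poly (gcd F G) x = 0" by auto
  moreover have "gcd F G dvd F" "gcd F G dvd G" by auto
  ultimately show "\<exists>x. poly F x = 0 \<and> poly G x = 0"
    by (metis dvdE mult_eq_0_iff poly_mult)
next
  assume "\<exists>x. poly F x = 0 \<and> poly G x = 0"
  then obtain x where "[:-x,1:] dvd F" "[:-x,1:] dvd G" by (auto simp: poly_eq_0_iff_dvd)
  then have "[:-x,1:] dvd gcd F G" by auto
  from dvd_imp_degree_le[OF this] F show "degree (gcd F G) \<noteq> 0" by auto
qed

text \<open>The gcd of \<open>F\<close> and \<open>F'\<close> has degree \<open>deg F - #roots\<close>, and at most \<open>i\<close> whenever the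
  \<open>i\<close>-th principal subresultant coefficient is nonzero.\<close>

lemma card_principal_subresultants_nonzero_le_card_roots:
  fixes F :: "complex poly"
  assumes F: "F \<noteq> 0"
  shows "card {j \<in> {1..<degree F}. \<exists>i\<in>{1..j}. Polynomial.coeff (subresultant i F (pderiv F)) i \<noteq> 0}
    \<le> card {x. poly F x = 0}"
proof -
  define g where "g = degree (gcd F (pderiv F))"
  have "{j \<in> {1..<degree F}. \<exists>i\<in>{1..j}. Polynomial.coeff (subresultant i F (pderiv F)) i \<noteq> 0}
      \<subseteq> {g..<degree F}"
  proof safe
    fix i j assume j: "j \<in> {1..<degree F}" and i: "i \<in> {1..j}"
      and nz: "Polynomial.coeff (subresultant i F (pderiv F)) i \<noteq> 0"
    have "g \<le> i" unfolding g_def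
      by (rule principal_subresultant_nonzero_imp_degree_gcd_le[OF _ _ _ nz])
        (use i j in \<open>auto simp: degree_pderiv\<close>)
    with i j show "j \<in> {g..<degree F}" by auto
  qed
  then have "card {j \<in> {1..<degree F}. \<exists>i\<in>{1..j}. Polynomial.coeff (subresultant i F (pderiv F)) i \<noteq> 0}
      \<le> card {g..<degree F}"
    by (intro card_mono) auto
  also have "\<dots> = card {x. poly F x = 0}"
    using card_roots_add_degree_gcd_pderiv[OF F] unfolding g_def by simp
  finally show ?thesis .
qed

section \<open>Integer polynomials over \<open>\<complex>\<close>\<close>

lemma of_int_poly_gcd:
  fixes a b :: "int poly"
  shows "\<exists>c. c \<noteq> 0 \<and> (of_int_poly (gcd a b) :: complex poly) = smult c (gcd (of_int_poly a) (of_int_poly b))"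
proof (cases "gcd a b = 0")
  case True
  then show ?thesis by (intro exI[of _ 1]) auto
next
  case False
  let ?L = "lead_coeff (gcd a b)"
  have L: "?L \<noteq> 0" using False by auto
  interpret fh: field_hom' "of_rat :: rat \<Rightarrow> complex" by unfold_locales
  have of_rat_of_int: "\<And>p. map_poly (of_rat :: rat \<Rightarrow> complex) (of_int_poly p) = of_int_poly p"
    by (subst map_poly_map_poly) (auto simp: o_def)
  have "map_poly (of_rat :: rat \<Rightarrow> complex) (gcd (of_int_poly a) (of_int_poly b))
     = map_poly of_rat (smult (inverse (of_int ?L)) (of_int_poly (gcd a b)))"
    by (rule arg_cong[where f = "map_poly of_rat"], rule gcd_rat_to_gcd_int)
  then have "gcd (of_int_poly a) (of_int_poly b)
      = smult (of_rat (inverse (of_int ?L))) (of_int_poly (gcd a b) :: complex poly)"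
    unfolding fh.map_poly_gcd of_rat_of_int by (simp add: hom_distribs of_rat_of_int)
  then have "smult (of_int ?L) (gcd (of_int_poly a) (of_int_poly b)) = (of_int_poly (gcd a b) :: complex poly)"
    using L by (simp add: of_rat_inverse)
  then show ?thesis using L by (intro exI[of _ "of_int ?L"]) auto
qed

lemma poly_of_int_poly_gcd_eq_0:
  fixes a b :: "int poly" and x :: complex
  assumes "poly (of_int_poly a) x = 0" "poly (of_int_poly b) x = 0"
  shows "poly (of_int_poly (gcd a b)) x = 0"
proof -
  obtain c where c: "(of_int_poly (gcd a b) :: complex poly) = smult c (gcd (of_int_poly a) (of_int_poly b))"
    using of_int_poly_gcd by blast
  from assms have "[:-x,1:] dvd gcd (of_int_poly a) (of_int_poly b :: complex poly)"
    by (simp add: poly_eq_0_iff_dvd)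
  then show ?thesis unfolding c by (simp add: poly_eq_0_iff_dvd)
qed

lemma sqfree_part_dvd: "sqfree_part R dvd R"
proof -
  have "primitive_part (R div gcd R (pderiv R)) dvd R div gcd R (pderiv R)"
    by (metis content_times_primitive_part dvd_smult dvd_refl)
  also have "\<dots> dvd R" by (metis dvd_def dvd_div_mult_self gcd_dvd1 mult.commute)
  finally show ?thesis unfolding sqfree_part_def .
qed

lemma content_sqfree_part:
  assumes "R \<noteq> 0"
  shows "content (sqfree_part R) = 1"
proof -
  have "R div gcd R (pderiv R) \<noteq> 0"
    using assms by (metis div_by_0 dvd_div_mult_self gcd_dvd1 mult_zero_left)
  then show ?thesis unfolding sqfree_part_def by (simp add: content_primitive_part)
qed

lemma square_free_of_int_poly_sqfree_part:
  assumes R0: "R \<noteq> 0"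
  shows "square_free (of_int_poly (sqfree_part R) :: complex poly)"
proof -
  define g where "g = gcd R (pderiv R)"
  define Q where "Q = R div g"
  define C where "C = (of_int_poly :: int poly \<Rightarrow> complex poly)"
  have RQ: "R = Q * g" unfolding Q_def g_def by simp
  with R0 have Q0: "Q \<noteq> 0" by auto
  obtain c where c: "c \<noteq> 0" and gc: "C g = smult c (gcd (C R) (C (pderiv R)))"
    using of_int_poly_gcd unfolding g_def C_def by blast
  define G where "G = gcd (C R) (pderiv (C R))"
  have CR0: "C R \<noteq> 0" using R0 unfolding C_def by simp
  then have G0: "G \<noteq> 0" unfolding G_def by simp
  have dR: "C (pderiv R) = pderiv (C R)" unfolding C_def by (simp add: of_int_hom.map_poly_pderiv)
  have "C R = C Q * C g" unfolding RQ C_def by (simp add: hom_distribs)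
  also have "\<dots> = smult c (C Q) * G" unfolding gc dR G_def by simp
  finally have "C R = smult c (C Q) * G" .
  moreover have "C R = (C R div G) * G" unfolding G_def by simp
  ultimately have "smult c (C Q) = C R div G" using G0 by (metis mult_right_cancel)
  with rsquarefree_div_gcd_pderiv[OF CR0] have "rsquarefree (smult c (C Q))" unfolding G_def by simp
  then have "square_free (C Q)" using c by (metis rsquarefree_square_free_complex square_free_smult_iff)
  moreover have "C Q = smult (of_int (content Q)) (C (primitive_part Q))"
    unfolding C_def by (metis content_times_primitive_part of_int_hom.map_poly_hom_smult)
  ultimately have "square_free (C (primitive_part Q))" using Q0 by simp
  then show ?thesis unfolding sqfree_part_def Q_def g_def C_def .
qed

lemma prime_factor_of_positive_degree:
  fixes p :: "'a :: {factorial_ring_gcd,semiring_gcd_mult_normalize} poly"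
  assumes "degree p \<noteq> 0"
  obtains q where "prime q" "q dvd p" "degree q \<noteq> 0"
proof -
  have pp0: "primitive_part p \<noteq> 0" using assms by auto
  have "\<not> is_unit (primitive_part p)"
  proof
    assume "is_unit (primitive_part p)"
    then obtain c where "primitive_part p = [:c:]" by (auto simp: is_unit_poly_iff)
    then have "degree (primitive_part p) = 0" by simp
    with assms show False by simp
  qed
  from prime_divisor_exists[OF pp0 this] obtain q where q: "q dvd primitive_part p" "prime q"
    by auto
  have "degree q \<noteq> 0"
  proof
    assume "degree q = 0"
    then obtain c where c: "q = [:c:]" by (rule degree_eq_zeroE)
    with q(1) have "c dvd content (primitive_part p)" by (simp add: const_poly_dvd_iff_dvd_content)
    with pp0 have "is_unit q" unfolding c by (simp add: content_primitive_part)
    with q(2) show False by auto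
  qed
  moreover have "primitive_part p dvd p"
    by (metis content_times_primitive_part dvd_smult dvd_refl)
  with q(1) have "q dvd p" by (rule dvd_trans)
  ultimately show ?thesis using q(2) that by blast
qed

lemma squarefree_imp_resultant_pderiv_nonzero:
  fixes f :: "'a :: {factorial_ring_gcd,semiring_gcd_mult_normalize,semiring_char_0} poly"
  assumes sf: "squarefree f" and "degree f \<ge> 1"
  shows "resultant f (pderiv f) \<noteq> 0"
proof
  assume "resultant f (pderiv f) = 0"
  then have "degree (gcd f (pderiv f)) \<noteq> 0" by (simp add: resultant_0_gcd)
  then obtain q where q: "prime q" "q dvd gcd f (pderiv f)" "degree q \<noteq> 0"
    by (rule prime_factor_of_positive_degree)
  then obtain r where fr: "f = q * r" by (auto elim: dvdE)
  have "q dvd pderiv f" using q(2) by auto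
  moreover have "pderiv f = q * pderiv r + r * pderiv q" unfolding fr pderiv_mult ..
  ultimately have "q dvd r * pderiv q" by (simp add: dvd_add_right_iff)
  moreover have "\<not> q dvd pderiv q"
  proof
    assume "q dvd pderiv q"
    moreover have "pderiv q \<noteq> 0" using q(3) by (simp add: pderiv_eq_0_iff)
    ultimately have "degree q \<le> degree (pderiv q)" by (rule dvd_imp_degree_le)
    with q(3) show False by (simp add: degree_pderiv)
  qed
  ultimately have "q dvd r" using q(1) by (simp add: prime_dvd_mult_iff)
  then have "q * q dvd f" unfolding fr by simp
  with sf have "is_unit q" unfolding squarefree_def power2_eq_square by blast
  with q(1) show False by auto
qed

section \<open>Gcd chains\<close>

fun gcd_chain :: "'a :: semiring_gcd \<Rightarrow> (nat \<Rightarrow> 'a) \<Rightarrow> nat \<Rightarrow> 'a" where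
  "gcd_chain a g 0 = a"
| "gcd_chain a g (Suc j) = gcd (gcd_chain a g j) (g (Suc j))"

lemma gcd_chain_Suc_dvd: "gcd_chain a g (Suc j) dvd gcd_chain a g j"
  by simp

lemma gcd_chain_dvd: "gcd_chain a g j dvd a"
proof (induction j)
  case (Suc j)
  with gcd_chain_Suc_dvd show ?case by (rule dvd_trans)
qed simp

lemma gcd_chain_nonzero: "a \<noteq> 0 \<Longrightarrow> gcd_chain a g j \<noteq> 0"
  using gcd_chain_dvd[of a g j] by auto

lemma S_p_eq_gcd_chain: "S_p F j = gcd_chain (S_p F 0) (sr_p F) j"
  by (induction j) simp_all

lemma of_int_poly_gcd_chain_dvd:
  "(of_int_poly (gcd_chain a g j) :: 'a :: {factorial_ring_gcd,semiring_gcd_mult_normalize} poly)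
    dvd gcd_chain (of_int_poly a) (of_int_poly \<circ> g) j"
proof (induction j)
  case (Suc j)
  have "(of_int_poly (gcd_chain a g (Suc j)) :: 'a poly) dvd of_int_poly (gcd_chain a g j)"
    by (rule of_int_poly_hom.hom_dvd[OF gcd_chain_Suc_dvd])
  also have "\<dots> dvd gcd_chain (of_int_poly a) (of_int_poly \<circ> g) j" by (rule Suc.IH)
  finally have "(of_int_poly (gcd_chain a g (Suc j)) :: 'a poly) dvd gcd_chain (of_int_poly a) (of_int_poly \<circ> g) j" .
  moreover have "(of_int_poly (gcd_chain a g (Suc j)) :: 'a poly) dvd of_int_poly (g (Suc j))"
    by (rule of_int_poly_hom.hom_dvd) simp
  ultimately show ?case by (simp add: comp_def)
qed simp

lemma poly_of_int_poly_gcd_chain_eq_0: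
  fixes x :: complex
  assumes "poly (of_int_poly a) x = 0" "\<forall>i\<in>{1..j}. poly (of_int_poly (g i)) x = 0"
  shows "poly (of_int_poly (gcd_chain a g j)) x = 0"
  using assms(2)
proof (induction j)
  case (Suc j)
  then have "poly (of_int_poly (gcd_chain a g j)) x = 0" "poly (of_int_poly (g (Suc j))) x = 0"
    by auto
  then show ?case by (simp add: poly_of_int_poly_gcd_eq_0)
qed (simp add: assms(1))

text \<open>The degree lost along a chain starting at a polynomial square-free over \<open>\<complex>\<close> is
  bounded by the roots that are dropped: a root kept by none of the \<open>g\<^sub>i\<close> divides both factors
  of \<open>a = G\<^sub>j \<cdot> (a div G\<^sub>j)\<close>.\<close>

lemma degree_gcd_chain_loss_le_card_roots:
  fixes a :: "int poly"
  assumes sf: "square_free (of_int_poly a :: complex poly)"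
  shows "degree a - degree (gcd_chain a g j)
    \<le> card {x :: complex. poly (of_int_poly a) x = 0 \<and> (\<exists>i\<in>{1..j}. poly (of_int_poly (g i)) x \<noteq> 0)}"
proof -
  define C where "C = (of_int_poly :: int poly \<Rightarrow> complex poly)"
  define G where "G = gcd_chain a g j"
  define H where "H = a div G"
  have a0: "a \<noteq> 0" using sf unfolding square_free_def by auto
  have aGH: "a = G * H" unfolding H_def G_def by (simp add: gcd_chain_dvd)
  from a0 have G0: "G \<noteq> 0" and H0: "H \<noteq> 0" unfolding aGH by auto
  have CaGH: "C a = C G * C H" unfolding aGH C_def by (simp add: hom_distribs)
  have sfH: "square_free (C H)" using sf unfolding C_def[symmetric] CaGH
    by (rule square_free_factor[rotated]) simp
  have "degree a - degree G = degree (C H)"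
    unfolding aGH C_def using G0 H0 by (simp add: degree_mult_eq)
  also have "\<dots> = card {x. poly (C H) x = 0}"
    using rsquarefree_card_degree square_free_rsquarefree[OF sfH] H0 unfolding C_def by simp
  also have "\<dots> \<le> card {x. poly (C a) x = 0 \<and> (\<exists>i\<in>{1..j}. poly (C (g i)) x \<noteq> 0)}"
  proof (rule card_mono)
    show "finite {x. poly (C a) x = 0 \<and> (\<exists>i\<in>{1..j}. poly (C (g i)) x \<noteq> 0)}"
      using poly_roots_finite[of "C a"] a0 unfolding C_def by (auto elim: finite_subset[rotated])
    show "{x. poly (C H) x = 0} \<subseteq> {x. poly (C a) x = 0 \<and> (\<exists>i\<in>{1..j}. poly (C (g i)) x \<noteq> 0)}"
    proof safe
      fix x assume Hx: "poly (C H) x = 0"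
      then show ax: "poly (C a) x = 0" unfolding CaGH by simp
      show "\<exists>i\<in>{1..j}. poly (C (g i)) x \<noteq> 0"
      proof (rule ccontr)
        assume "\<not> ?thesis"
        then have "poly (C G) x = 0"
          using poly_of_int_poly_gcd_chain_eq_0[of a x j g] ax unfolding G_def C_def by auto
        with Hx have "[:-x,1:] * [:-x,1:] dvd C a"
          unfolding CaGH by (intro mult_dvd_mono) (simp_all add: poly_eq_0_iff_dvd)
        moreover have "degree [:-x,1:] > 0" by simp
        ultimately show False using sf unfolding C_def square_free_def by blast
      qed
    qed
  qed
  finally show ?thesis unfolding C_def G_def .
qed

text \<open>The image of the chain divides the chain of the images.\<close>

lemma degree_gcd_chain_loss_of_int_poly_le:
  fixes a :: "int poly"
  assumes a0: "(of_int_poly a :: 'a :: {factorial_ring_gcd,semiring_gcd_mult_normalize} poly) \<noteq> 0"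
  shows "degree (of_int_poly a :: 'a poly) - degree (gcd_chain (of_int_poly a :: 'a poly) (of_int_poly \<circ> g) j)
    \<le> degree a - degree (gcd_chain a g j)"
proof -
  define G where "G = gcd_chain a g j"
  define H where "H = a div G"
  have aGH: "a = G * H" unfolding H_def G_def by (simp add: gcd_chain_dvd)
  have "a \<noteq> 0" using a0 by auto
  then have "G \<noteq> 0" "H \<noteq> 0" unfolding aGH by auto
  then have "degree a = degree G + degree H" unfolding aGH by (rule degree_mult_eq)
  moreover have "degree (of_int_poly a :: 'a poly) \<le> degree (of_int_poly G :: 'a poly) + degree (of_int_poly H :: 'a poly)"
    unfolding aGH of_int_poly_hom.hom_mult by (rule degree_mult_le)
  moreover have "degree (of_int_poly H :: 'a poly) \<le> degree H" by (rule degree_map_poly_le)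
  moreover have "degree (of_int_poly G :: 'a poly) \<le> degree (gcd_chain (of_int_poly a :: 'a poly) (of_int_poly \<circ> g) j)"
    using dvd_imp_degree_le[OF of_int_poly_gcd_chain_dvd gcd_chain_nonzero[OF a0]] unfolding G_def .
  ultimately show ?thesis unfolding G_def by linarith
qed

section \<open>Reduction modulo \<open>p\<close>\<close>

lemma of_int_poly_mod_ring_eq_0_iff:
  "(of_int_poly q :: 'p :: prime_card mod_ring poly) = 0 \<longleftrightarrow> [:int CARD('p):] dvd q"
proof -
  have "(of_int_poly q :: 'p mod_ring poly) = 0 \<longleftrightarrow> (\<forall>i. (of_int (Polynomial.coeff q i) :: 'p mod_ring) = 0)"
    by (simp add: poly_eq_iff coeff_map_poly)
  also have "\<dots> \<longleftrightarrow> (\<forall>i. int CARD('p) dvd Polynomial.coeff q i)"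
    by (simp add: of_int_eq_0_iff_char_dvd)
  also have "\<dots> \<longleftrightarrow> [:int CARD('p):] dvd q" by (simp add: const_poly_dvd_iff)
  finally show ?thesis .
qed

lemma degree_mod_p_poly2:
  assumes "\<not> [:int CARD('p :: prime_card):] dvd lead_coeff F"
  shows "degree (mod_p_poly2 F :: 'p mod_ring poly poly) = degree F"
  unfolding mod_p_poly2_def
  by (rule map_poly_degree_eq) (use assms in \<open>simp add: of_int_poly_mod_ring_eq_0_iff\<close>)

lemma sr_p_eq_of_int_poly_sres:
  assumes "\<not> [:int CARD('p :: prime_card):] dvd lead_coeff F"
    and "\<not> [:int CARD('p):] dvd lead_coeff (pderiv F)"
  shows "(sr_p F i :: 'p mod_ring poly) = of_int_poly (sres i F (pderiv F))"
proof -
  have "map_poly of_int_poly (subresultant i F (pderiv F))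
      = subresultant i (mod_p_poly2 F :: 'p mod_ring poly poly) (mod_p_poly2 (pderiv F))"
    using degree_mod_p_poly2[OF assms(1)] degree_mod_p_poly2[OF assms(2)] unfolding mod_p_poly2_def
    by (rule of_int_poly_hom.subresultant_map_poly)
  then show ?thesis unfolding sr_p_def sres_def by (metis coeff_map_poly of_int_poly_hom.hom_zero)
qed

lemma degree_div_dvd:
  fixes a b :: "'a :: idom_divide poly"
  assumes "b dvd a" "a \<noteq> 0"
  shows "degree (a div b) = degree a - degree b"
proof -
  from assms have "a = b * (a div b)" "b \<noteq> 0" "a div b \<noteq> 0" by auto
  then show ?thesis by (metis add_diff_cancel_left' degree_mult_eq)
qed

lemma S_p_nonzero:
  assumes "res_y F \<noteq> 0"
  shows "(S_p F j :: 'p :: prime_card mod_ring poly) \<noteq> 0"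
proof -
  have "(S_p F 0 :: 'p mod_ring poly) \<noteq> 0"
    using content_sqfree_part[OF assms] prime_card_int[where 'a='p]
    unfolding S_p.simps(1) of_int_poly_mod_ring_eq_0_iff const_poly_dvd_iff_dvd_content by auto
  then show ?thesis using gcd_chain_nonzero S_p_eq_gcd_chain by metis
qed

lemma degree_S_p_Suc_le:
  assumes "res_y F \<noteq> 0"
  shows "degree (S_p F (Suc j) :: 'p :: prime_card mod_ring poly) \<le> degree (S_p F j :: 'p mod_ring poly)"
  by (rule dvd_imp_degree_le) (simp_all add: S_p_nonzero[OF assms])

lemma d_p_eq_degree_diff:
  assumes "res_y F \<noteq> 0" and "0 < i"
  shows "d_p F i TYPE('p) = degree (S_p F (i - 1) :: 'p :: prime_card mod_ring poly) - degree (S_p F i :: 'p mod_ring poly)"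
proof -
  obtain k where i: "i = Suc k" using assms(2) gr0_implies_Suc by blast
  have Gcd: "Gcd ((S_p F :: nat \<Rightarrow> 'p mod_ring poly) ` {0..j}) = normalize (S_p F j)" for j
  proof (induction j)
    case (Suc j)
    have "{0..Suc j} = insert (Suc j) {0..j}" by auto
    with Suc show ?case by (simp add: gcd_proj1_if_dvd)
  qed simp
  have "R_p F i = (normalize (S_p F k) div normalize (S_p F (Suc k)) :: 'p mod_ring poly)"
    unfolding R_p_def i atLeastLessThanSuc_atLeastAtMost Gcd by (rule refl)
  also have "degree \<dots> = degree (S_p F k :: 'p mod_ring poly) - degree (S_p F (Suc k) :: 'p mod_ring poly)"
    using S_p_nonzero[OF assms(1)] by (subst degree_div_dvd) auto
  finally show ?thesis unfolding d_p_def i by simp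
qed

lemma degree_S_p_loss_le:
  assumes "res_y F \<noteq> 0"
    and "\<not> [:int CARD('p :: prime_card):] dvd lead_coeff F"
    and "\<not> [:int CARD('p):] dvd lead_coeff (pderiv F)"
  shows "degree (S_p F 0 :: 'p mod_ring poly) - degree (S_p F j :: 'p mod_ring poly)
    \<le> degree (sqfree_part (res_y F)) - degree (gcd_chain (sqfree_part (res_y F)) (\<lambda>i. sres i F (pderiv F)) j)"
proof -
  have "(S_p F j :: 'p mod_ring poly)
      = gcd_chain (of_int_poly (sqfree_part (res_y F))) (of_int_poly \<circ> (\<lambda>i. sres i F (pderiv F))) j" for j
    unfolding S_p_eq_gcd_chain[of F j] S_p.simps(1) sr_p_eq_of_int_poly_sres[OF assms(2,3)] comp_def ..
  then show ?thesis
    using degree_gcd_chain_loss_of_int_poly_le[of "sqfree_part (res_y F)"] S_p_nonzero[OF assms(1), of 0]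
    by simp
qed

section \<open>Curves with constant fibre degree\<close>

locale curve_with_constant_fibre_degree =
  fixes f :: "int poly poly"
  assumes squarefree: "squarefree f"
    and degree_pos: "degree f \<ge> 1"
    and degree_eval_x: "degree (eval_x \<alpha> f) = degree f"
begin

lemma eval_x_hom: "idom_hom (\<lambda>c. poly (of_int_poly c :: complex poly) \<alpha>)"
  by unfold_locales (simp_all add: hom_distribs)

lemma eval_x_pderiv: "eval_x \<alpha> (pderiv F) = pderiv (eval_x \<alpha> F)"
  unfolding eval_x_def using idom_hom.map_poly_pderiv[OF eval_x_hom] by simp

lemma eval_x_nonzero: "eval_x \<alpha> f \<noteq> 0"
  using degree_eval_x[of \<alpha>] degree_pos by auto

lemma degree_eval_x_pderiv: "degree (eval_x \<alpha> (pderiv f)) = degree (pderiv f)"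
  unfolding eval_x_pderiv degree_pderiv degree_eval_x ..

lemma poly_res_y: "poly (of_int_poly (res_y f)) \<alpha> = resultant (eval_x \<alpha> f) (pderiv (eval_x \<alpha> f))"
proof -
  interpret comm_ring_hom "\<lambda>c. poly (of_int_poly c :: complex poly) \<alpha>"
    using eval_x_hom by (simp add: idom_hom_def)
  have "resultant (eval_x \<alpha> f) (eval_x \<alpha> (pderiv f)) = poly (of_int_poly (res_y f)) \<alpha>"
    unfolding eval_x_def res_y_def
    by (rule resultant_map_poly) (use degree_eval_x degree_eval_x_pderiv in \<open>simp_all add: eval_x_def\<close>)
  then show ?thesis unfolding eval_x_pderiv by simp
qed

lemma poly_sres: "poly (of_int_poly (sres i f (pderiv f))) \<alpha>
    = Polynomial.coeff (subresultant i (eval_x \<alpha> f) (pderiv (eval_x \<alpha> f))) i"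
proof -
  interpret comm_ring_hom "\<lambda>c. poly (of_int_poly c :: complex poly) \<alpha>"
    using eval_x_hom by (simp add: idom_hom_def)
  have "map_poly (\<lambda>c. poly (of_int_poly c) \<alpha>) (subresultant i f (pderiv f))
      = subresultant i (eval_x \<alpha> f) (eval_x \<alpha> (pderiv f))"
    unfolding eval_x_def
    by (rule subresultant_map_poly) (use degree_eval_x degree_eval_x_pderiv in \<open>simp_all add: eval_x_def\<close>)
  then show ?thesis unfolding sres_def eval_x_pderiv by (metis coeff_map_poly hom_zero)
qed

lemma res_y_nonzero: "res_y f \<noteq> 0"
  unfolding res_y_def by (rule squarefree_imp_resultant_pderiv_nonzero[OF squarefree degree_pos])

lemma x_critical_iff_res_y_root: "x_critical f \<alpha> \<longleftrightarrow> poly (of_int_poly (res_y f)) \<alpha> = 0"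
  unfolding poly_res_y resultant_0_gcd x_critical_def eval_x_pderiv
  by (rule degree_gcd_pos_iff_common_root[OF eval_x_nonzero, symmetric])

lemma finite_x_critical: "finite {\<alpha>. x_critical f \<alpha>}"
  unfolding x_critical_iff_res_y_root using res_y_nonzero by (simp add: poly_roots_finite)

lemma sqfree_part_root_imp_x_critical:
  assumes "poly (of_int_poly (sqfree_part (res_y f))) \<alpha> = 0"
  shows "x_critical f \<alpha>"
proof -
  have "[:-\<alpha>,1:] dvd of_int_poly (sqfree_part (res_y f))"
    using assms by (simp add: poly_eq_0_iff_dvd)
  also have "\<dots> dvd of_int_poly (res_y f)"
    by (rule of_int_poly_hom.hom_dvd[OF sqfree_part_dvd])
  finally show ?thesis unfolding x_critical_iff_res_y_root by (simp add: poly_eq_0_iff_dvd)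
qed

text \<open>Double counting the pairs \<open>(j, \<alpha>)\<close> with \<open>\<alpha>\<close> critical and \<open>sres\<^sub>i(\<alpha>) \<noteq> 0\<close> for some
  \<open>1 \<le> i \<le> j\<close>.\<close>

lemma sum_degree_gcd_chain_loss_le_N_total:
  "(\<Sum>j\<in>{1..<degree f}. degree (sqfree_part (res_y f))
      - degree (gcd_chain (sqfree_part (res_y f)) (\<lambda>i. sres i f (pderiv f)) j)) \<le> N_total f"
proof -
  define crit where "crit = {\<alpha>. x_critical f \<alpha>}"
  define kept where "kept j \<alpha> \<longleftrightarrow> (\<exists>i\<in>{1..j}. poly (of_int_poly (sres i f (pderiv f))) \<alpha> \<noteq> (0::complex))"
    for j \<alpha>
  let ?J = "{1..<degree f}"
  have "(\<Sum>j\<in>?J. degree (sqfree_part (res_y f))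
      - degree (gcd_chain (sqfree_part (res_y f)) (\<lambda>i. sres i f (pderiv f)) j))
      \<le> (\<Sum>j\<in>?J. card {\<alpha>\<in>crit. kept j \<alpha>})"
  proof (rule sum_mono)
    fix j
    have "degree (sqfree_part (res_y f)) - degree (gcd_chain (sqfree_part (res_y f)) (\<lambda>i. sres i f (pderiv f)) j)
        \<le> card {\<alpha>. poly (of_int_poly (sqfree_part (res_y f))) \<alpha> = 0 \<and> kept j \<alpha>}"
      unfolding kept_def
      by (rule degree_gcd_chain_loss_le_card_roots[OF square_free_of_int_poly_sqfree_part[OF res_y_nonzero]])
    also have "\<dots> \<le> card {\<alpha>\<in>crit. kept j \<alpha>}"
      using finite_x_critical sqfree_part_root_imp_x_critical unfolding crit_def
      by (intro card_mono) auto
    finally show "degree (sqfree_part (res_y f))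
      - degree (gcd_chain (sqfree_part (res_y f)) (\<lambda>i. sres i f (pderiv f)) j) \<le> card {\<alpha>\<in>crit. kept j \<alpha>}" .
  qed
  also have "\<dots> = (\<Sum>\<alpha>\<in>crit. card {j\<in>?J. kept j \<alpha>})"
    using sum.swap_restrict[of ?J crit "\<lambda>_ _. 1::nat" "\<lambda>j \<alpha>. kept j \<alpha>"] finite_x_critical
    unfolding crit_def by simp
  also have "\<dots> \<le> (\<Sum>\<alpha>\<in>crit. n_fiber f \<alpha>)"
  proof (rule sum_mono)
    fix \<alpha>
    show "card {j\<in>?J. kept j \<alpha>} \<le> n_fiber f \<alpha>"
      using card_principal_subresultants_nonzero_le_card_roots[OF eval_x_nonzero[of \<alpha>]]
      unfolding kept_def poly_sres n_fiber_def degree_eval_x .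
  qed
  finally show ?thesis unfolding N_total_def crit_def .
qed

end

lemma antimono_sum_decrements:
  fixes s :: "nat \<Rightarrow> nat"
  assumes antimono: "\<And>i. s (Suc i) \<le> s i"
  shows "(\<Sum>i\<in>{1..j}. s (i - 1) - s i) = s 0 - s j"
proof (induction j)
  case (Suc j)
  have "s (Suc j) \<le> s j" "s j \<le> s 0" using antimono lift_Suc_antimono_le[of s 0 j] by auto
  with Suc show ?case by simp
qed simp

lemma sum_weighted_decrements:
  fixes s :: "nat \<Rightarrow> nat"
  assumes antimono: "\<And>i. s (Suc i) \<le> s i"
  shows "(\<Sum>i\<in>{1..<m}. (m - i) * (s (i - 1) - s i)) = (\<Sum>j\<in>{1..<m}. s 0 - s j)"
proof -
  have "(\<Sum>j\<in>{1..<m}. s 0 - s j) = (\<Sum>j\<in>{1..<m}. \<Sum>i\<in>{i\<in>{1..<m}. i \<le> j}. s (i - 1) - s i)"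
  proof (rule sum.cong)
    fix j assume "j \<in> {1..<m}"
    then have "{i\<in>{1..<m}. i \<le> j} = {1..j}" by auto
    then show "s 0 - s j = (\<Sum>i\<in>{i\<in>{1..<m}. i \<le> j}. s (i - 1) - s i)"
      using antimono_sum_decrements[of s, OF antimono] by simp
  qed simp
  also have "\<dots> = (\<Sum>i\<in>{1..<m}. \<Sum>j\<in>{j\<in>{1..<m}. i \<le> j}. s (i - 1) - s i)"
    by (rule sum.swap_restrict) auto
  also have "\<dots> = (\<Sum>i\<in>{1..<m}. (m - i) * (s (i - 1) - s i))"
  proof (rule sum.cong)
    fix i assume "i \<in> {1..<m}"
    then have "{j\<in>{1..<m}. i \<le> j} = {i..<m}" by auto
    then show "(\<Sum>j\<in>{j\<in>{1..<m}. i \<le> j}. s (i - 1) - s i) = (m - i) * (s (i - 1) - s i)" by simp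
  qed simp
  finally show ?thesis ..
qed

theorem lemma4:
  fixes f :: "int poly poly"
  assumes "squarefree f"
    and "degree f \<ge> 1"
    and "\<forall>\<alpha>::complex. degree (eval_x \<alpha> f) = degree f"
    and "\<not> [:int CARD('p::prime_card):] dvd lead_coeff f"
    and "\<not> [:int CARD('p):] dvd lead_coeff (pderiv f)"
  shows "(\<Sum>i\<in>{1..<degree f}. (degree f - i) * d_p f i TYPE('p)) \<le> N_total f"
proof -
  interpret curve_with_constant_fibre_degree f using assms(1-3) by unfold_locales auto
  let ?n = "degree f" and ?P = "sqfree_part (res_y f)" and ?g = "\<lambda>i. sres i f (pderiv f)"
  define s where "s j = degree (S_p f j :: 'p mod_ring poly)" for j
  have "(\<Sum>i\<in>{1..<?n}. (?n - i) * d_p f i TYPE('p)) = (\<Sum>i\<in>{1..<?n}. (?n - i) * (s (i - 1) - s i))"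
    using d_p_eq_degree_diff[OF res_y_nonzero, where 'p='p] unfolding s_def by (intro sum.cong) auto
  also have "\<dots> = (\<Sum>j\<in>{1..<?n}. s 0 - s j)"
    using degree_S_p_Suc_le[OF res_y_nonzero] unfolding s_def by (rule sum_weighted_decrements)
  also have "\<dots> \<le> (\<Sum>j\<in>{1..<?n}. degree ?P - degree (gcd_chain ?P ?g j))"
    using degree_S_p_loss_le[OF res_y_nonzero assms(4,5)] unfolding s_def by (rule sum_mono)
  also have "\<dots> \<le> N_total f"
    by (rule sum_degree_gcd_chain_loss_le_N_total)
  finally show ?thesis .
qed

end
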